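(* Let $n,m\ge1$, $a\in\mathbb{R}^n$ with $\|a\|=1$, $d\in\mathbb{R}^m$ with $\|d\|<1$, and $\lambda\in\mathbb{R}^n$ with $\|\lambda\|=1$ and $\lambda\neq\pm a$. Let $$H=\{(x,y)\in\mathbb{R}^{n+m} : a^\mathsf{T} x+d^\mathsf{T} y=-1\},\qquad S_{\le0}=\{(x,y)\in\mathbb{R}^{n+m}:\|x\|\le\|y\|,\ a^\mathsf{T} x+d^\mathsf{T} y\le 0\},$$ and $$C=\{(x,y)\in\mathbb{R}^{n+m} : -\lambda^\mathsf{T} x+\nabla\phi_\lambda(\beta)^\mathsf{T} y\le r(\beta)\ \text{ for all }\beta\in\mathbb{R}^m,\ \|\beta\|=1\}.$$ Then $C$ is maximal $S_{\le0}$-free with respect to $H$. Additionally, if $\lambda=\bar x/\|\bar x\|$ for some $(\bar x,\bar y)\in H$ with $\|\bar x\|>\|\bar y\|$, then $(\bar x,\bar y)\in\operatorname{int}(C)$.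
   Context: $\|\cdot\|$ is the Euclidean norm. For $y\in\mathbb{R}^m$, $\phi_\lambda(y)=\max\{\lambda^\mathsf{T} x : x\in\mathbb{R}^n,\ \|x\|\le\|y\|,\ a^\mathsf{T} x+d^\mathsf{T} y\le 0\}$; under the hypotheses this is a finite convex function differentiable on $\mathbb{R}^m\setminus\{0\}$, and $\nabla\phi_\lambda(\beta)$ denotes its gradient. For $\|\beta\|=1$, $r(\beta)=0$ if $\lambda^\mathsf{T} a+d^\mathsf{T}\beta\le0$, and otherwise $r(\beta)=\dfrac{d^\mathsf{T}\beta+\lambda^\mathsf{T} a\,\phi_\lambda(\beta)}{\phi_\lambda(\beta)+d^\mathsf{T}\beta\,\lambda^\mathsf{T} a}$. For a closed set $S$, a convex set $C$ is $S$-free if $\operatorname{int}(C)\cap S=\emptyset$. Given an affine hyperplane $H$, a closed convex $C$ is $S$-free with respect to $H$ if the interior of $C\cap H$ relative to $H$ does not meet $S\cap H$; it is maximal $S$-free with respect to $H$ if for every closed convex $C'\supseteq C$ that is $S$-free with respect to $H$, $C'\cap H\subseteq C\cap H$. *)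

theory Defs
  imports "HOL-Analysis.Analysis"
begin

definition phi :: "'n::euclidean_space \<Rightarrow> 'n \<Rightarrow> 'm::euclidean_space \<Rightarrow> 'm \<Rightarrow> real" where
  "phi lam a d y = Sup {lam \<bullet> x | x. norm x \<le> norm y \<and> a \<bullet> x + d \<bullet> y \<le> 0}"

definition grad :: "('m::euclidean_space \<Rightarrow> real) \<Rightarrow> 'm \<Rightarrow> 'm" where
  "grad f x = (SOME g. (f has_derivative (\<lambda>h. g \<bullet> h)) (at x))"

definition rfun :: "'n::euclidean_space \<Rightarrow> 'n \<Rightarrow> 'm::euclidean_space \<Rightarrow> 'm \<Rightarrow> real" where
  "rfun lam a d \<beta> =
     (if lam \<bullet> a + d \<bullet> \<beta> \<le> 0 then 0
      else (d \<bullet> \<beta> + (lam \<bullet> a) * phi lam a d \<beta>) / (phi lam a d \<beta> + (d \<bullet> \<beta>) * (lam \<bullet> a)))"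

definition S_free_wrt :: "'a::euclidean_space set \<Rightarrow> 'a set \<Rightarrow> 'a set \<Rightarrow> bool" where
  "S_free_wrt S H C \<longleftrightarrow> ((top_of_set H) interior_of (C \<inter> H)) \<inter> (S \<inter> H) = {}"

definition max_S_free_wrt :: "'a::euclidean_space set \<Rightarrow> 'a set \<Rightarrow> 'a set \<Rightarrow> bool" where
  "max_S_free_wrt S H C \<longleftrightarrow>
     closed C \<and> convex C \<and> S_free_wrt S H C \<and>
     (\<forall>C'. closed C' \<and> convex C' \<and> C \<subseteq> C' \<and> S_free_wrt S H C' \<longrightarrow> C' \<inter> H \<subseteq> C \<inter> H)"

end

theory Submission
  imports Defs
begin

text \<open>For a unit vector \<open>\<beta>\<close>, the maximiser \<open>dir \<beta>\<close> in the definition of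
  \<open>phi \<beta>\<close> is a unit vector, and the optimality condition \<open>lam = \<kappa> \<beta> dir \<beta> + \<mu> \<beta> a\<close> identifies
  the gradient of \<open>phi\<close> at \<open>\<beta>\<close> as \<open>\<kappa> \<beta> \<beta> - \<mu> \<beta> d\<close> and \<open>r \<beta>\<close> as \<open>\<mu> \<beta>\<close>. On \<open>H\<close> the
  inequalities defining \<open>C\<close> then read \<open>\<beta> \<bullet> y \<le> dir \<beta> \<bullet> x\<close>, and the key estimate
  \<open>\<beta> \<bullet> \<beta>' \<le> dir \<beta> \<bullet> dir \<beta>'\<close> (Cauchy--Schwarz for the form \<open>u \<bullet> v - (d \<bullet> u) (d \<bullet> v)\<close>)
  shows that each light-like vector \<open>(dir \<beta>, \<beta>)\<close> is, after scaling, a point of \<open>C \<inter> H\<close> or a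
  recession direction of \<open>C\<close> parallel to \<open>H\<close>.

  A point \<open>(x, y)\<close> of \<open>S \<inter> H\<close> violates or makes tight the constraint of \<open>\<beta> = y / \<parallel>y\<parallel>\<close>, so it
  is not relatively interior in \<open>C \<inter> H\<close>. Conversely, if a convex \<open>C' \<supseteq> C\<close> contains a point of
  \<open>H\<close> violating the constraint of \<open>\<beta>\<close>, then moving from it towards the light-like point, or
  along the light-like ray, reaches an interior point \<open>(x, y)\<close> of \<open>C'\<close> in \<open>H\<close> with
  \<open>\<parallel>x\<parallel> < \<parallel>y\<parallel>\<close>, so \<open>C'\<close> is not \<open>S\<close>-free.\<close>

lemma cross_sqrt_one_minus_square_le:
  fixes u v :: real
  assumes "u \<le> v" "u\<^sup>2 < 1" "v\<^sup>2 < 1"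
  shows "u * sqrt (1 - v\<^sup>2) \<le> v * sqrt (1 - u\<^sup>2)"
proof -
  have nonneg: "p * sqrt (1 - q\<^sup>2) \<le> q * sqrt (1 - p\<^sup>2)"
    if "0 \<le> p" "p \<le> q" "q\<^sup>2 < 1" for p q :: real
  proof (rule power2_le_imp_le)
    have "p\<^sup>2 \<le> q\<^sup>2" using that by (intro power_mono) auto
    moreover have "p\<^sup>2 < 1" using \<open>p\<^sup>2 \<le> q\<^sup>2\<close> that(3) by linarith
    ultimately have "p\<^sup>2 * (1 - q\<^sup>2) \<le> q\<^sup>2 * (1 - p\<^sup>2)" by (simp add: algebra_simps)
    then show "(p * sqrt (1 - q\<^sup>2))\<^sup>2 \<le> (q * sqrt (1 - p\<^sup>2))\<^sup>2"
      using that \<open>p\<^sup>2 < 1\<close> by (simp add: power_mult_distrib)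
    show "0 \<le> q * sqrt (1 - p\<^sup>2)" using that \<open>p\<^sup>2 < 1\<close> by (intro mult_nonneg_nonneg) auto
  qed
  consider "0 \<le> u" | "u < 0" "0 \<le> v" | "v < 0" by linarith
  then show ?thesis
  proof cases
    case 1
    then show ?thesis using nonneg assms by blast
  next
    case 2
    have "u * sqrt (1 - v\<^sup>2) \<le> 0" using 2 assms(3) by (intro mult_nonpos_nonneg) auto
    moreover have "0 \<le> v * sqrt (1 - u\<^sup>2)" using 2 assms(2) by (intro mult_nonneg_nonneg) auto
    ultimately show ?thesis by linarith
  next
    case 3
    have "(- v) * sqrt (1 - (- u)\<^sup>2) \<le> (- u) * sqrt (1 - (- v)\<^sup>2)"
      using 3 assms by (intro nonneg) auto
    then show ?thesis by simp
  qed
qed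

text \<open>Both sides are inner products of points \<open>(t, sqrt (1 - t\<^sup>2))\<close> of the unit semicircle.\<close>
lemma semicircle_inner_mono:
  fixes u v w :: real
  assumes "u \<le> v" "v \<le> w" "u\<^sup>2 < 1" "v\<^sup>2 < 1" "w\<^sup>2 < 1"
  shows "u * w + sqrt (1 - u\<^sup>2) * sqrt (1 - w\<^sup>2) \<le> v * w + sqrt (1 - v\<^sup>2) * sqrt (1 - w\<^sup>2)"
proof -
  define U V W where "U = sqrt (1 - u\<^sup>2)" and "V = sqrt (1 - v\<^sup>2)" and "W = sqrt (1 - w\<^sup>2)"
  have "U + V > 0" using assms by (simp add: U_def V_def add_pos_pos)
  have "u * W \<le> w * U" "v * W \<le> w * V"
    using assms by (auto simp: U_def V_def W_def intro: cross_sqrt_one_minus_square_le)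
  then have "0 \<le> (v - u) * ((w * U - u * W) + (w * V - v * W))" using assms(1) by simp
  also have "\<dots> = (v - u) * w * (U + V) + (V\<^sup>2 - U\<^sup>2) * W"
    using assms by (simp add: U_def V_def algebra_simps power2_eq_square)
  also have "\<dots> = (U + V) * ((v - u) * w + (V - U) * W)" by (simp add: algebra_simps power2_eq_square)
  finally have "0 \<le> (v - u) * w + (V - U) * W" using \<open>U + V > 0\<close> by (simp add: zero_le_mult_iff)
  then show ?thesis by (simp add: U_def V_def W_def algebra_simps)
qed

lemma light_cone_segment:
  fixes x x' :: "'a::real_inner" and y y' :: "'b::real_inner"
  assumes "norm x = norm y" and "x \<bullet> x' < y \<bullet> y'"
  obtains \<theta> where "0 < \<theta>" "\<theta> \<le> 1" "norm (x - \<theta> *\<^sub>R (x - x')) < norm (y - \<theta> *\<^sub>R (y - y'))"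
proof -
  define b where "b = y \<bullet> y' - x \<bullet> x'"
  define Q where "Q = (x - x') \<bullet> (x - x') - (y - y') \<bullet> (y - y')"
  define \<theta> where "\<theta> = b / (\<bar>Q\<bar> + b)"
  have "b > 0" using assms(2) by (simp add: b_def)
  then have \<theta>: "0 < \<theta>" "\<theta> \<le> 1" by (auto simp: \<theta>_def)
  have "\<theta> * Q \<le> \<theta> * \<bar>Q\<bar>" using \<theta> by (simp add: mult_left_mono)
  also have "\<dots> < b" using \<open>b > 0\<close> by (simp add: \<theta>_def field_simps)
  finally have "\<theta> * (\<theta> * Q - 2 * b) < 0" using \<theta> \<open>b > 0\<close> by (simp add: mult_pos_neg)
  moreover have "x \<bullet> x = y \<bullet> y" using assms(1) by (simp flip: power2_norm_eq_inner)
  ultimately have "(x - \<theta> *\<^sub>R (x - x')) \<bullet> (x - \<theta> *\<^sub>R (x - x'))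
      < (y - \<theta> *\<^sub>R (y - y')) \<bullet> (y - \<theta> *\<^sub>R (y - y'))"
    by (simp add: Q_def b_def inner_commute algebra_simps)
  then show ?thesis using that \<theta> by (simp add: norm_eq_sqrt_inner)
qed

lemma light_cone_ray:
  fixes x u :: "'a::real_inner" and y v :: "'b::real_inner"
  assumes "norm u = norm v" and "u \<bullet> x < v \<bullet> y"
  obtains t where "0 < t" "norm (x + t *\<^sub>R u) < norm (y + t *\<^sub>R v)"
proof -
  define b where "b = v \<bullet> y - u \<bullet> x"
  define t where "t = (\<bar>x \<bullet> x - y \<bullet> y\<bar> + 1) / (2 * b)"
  have "b > 0" using assms(2) by (simp add: b_def)
  then have "t > 0" by (simp add: t_def add_pos_nonneg)
  have "2 * t * b = \<bar>x \<bullet> x - y \<bullet> y\<bar> + 1" using \<open>b > 0\<close> by (simp add: t_def)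
  moreover have "u \<bullet> u = v \<bullet> v" using assms(1) by (simp flip: power2_norm_eq_inner)
  ultimately have "(x + t *\<^sub>R u) \<bullet> (x + t *\<^sub>R u) < (y + t *\<^sub>R v) \<bullet> (y + t *\<^sub>R v)"
    by (simp add: b_def inner_commute algebra_simps)
  then show ?thesis using that \<open>t > 0\<close> by (simp add: norm_eq_sqrt_inner)
qed

lemma has_derivative_squeeze:
  fixes f L U :: "'a::real_normed_vector \<Rightarrow> real"
  assumes dL: "(L has_derivative D) (at x)" and dU: "(U has_derivative D) (at x)"
    and ev: "\<forall>\<^sub>F y in at x. L y \<le> f y \<and> f y \<le> U y"
    and "L x = f x" and "U x = f x"
  shows "(f has_derivative D) (at x)"
proof -
  let ?r = "\<lambda>g h. norm (g (x + h) - g x - D h) / norm h"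
  from dL have "bounded_linear D" and rL: "?r L \<midarrow>0\<rightarrow> 0" by (auto simp: has_derivative_at)
  from dU have rU: "?r U \<midarrow>0\<rightarrow> 0" by (auto simp: has_derivative_at)
  have ev0: "\<forall>\<^sub>F h in at 0. L (x + h) \<le> f (x + h) \<and> f (x + h) \<le> U (x + h)"
    using ev by (simp add: eventually_at_to_0 [of _ x] add.commute)
  have "?r f \<midarrow>0\<rightarrow> 0"
  proof (rule tendsto_sandwich [where f = "\<lambda>h. 0" and h = "\<lambda>h. ?r L h + ?r U h"])
    show "\<forall>\<^sub>F h in at 0. 0 \<le> ?r f h" by simp
    show "\<forall>\<^sub>F h in at 0. ?r f h \<le> ?r L h + ?r U h"
      using ev0
    proof eventually_elim
      case (elim h)
      have "norm (f (x + h) - f x - D h) \<le> norm (L (x + h) - L x - D h) + norm (U (x + h) - U x - D h)"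
        using elim assms(4,5) by auto
      then show ?case by (simp add: add_divide_distrib [symmetric] divide_right_mono)
    qed
    show "(\<lambda>h. 0) \<midarrow>0\<rightarrow> 0" by simp
    show "(\<lambda>h. ?r L h + ?r U h) \<midarrow>0\<rightarrow> 0" using tendsto_add [OF rL rU] by simp
  qed
  with \<open>bounded_linear D\<close> show ?thesis by (simp add: has_derivative_at)
qed

lemma grad_eqI:
  fixes f :: "'a::euclidean_space \<Rightarrow> real"
  assumes "(f has_derivative (\<lambda>h. g \<bullet> h)) (at x)"
  shows "grad f x = g"
proof -
  have "(f has_derivative (\<lambda>h. grad f x \<bullet> h)) (at x)"
    unfolding grad_def using assms by (rule someI)
  then have "(\<lambda>h. grad f x \<bullet> h) = (\<lambda>h. g \<bullet> h)" using assms by (rule has_derivative_unique)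
  then have "grad f x \<bullet> (grad f x - g) = g \<bullet> (grad f x - g)" by metis
  then have "(grad f x - g) \<bullet> (grad f x - g) = 0" by (simp add: inner_diff_left)
  then show ?thesis by simp
qed

lemma openin_ray_exits_not_immediately:
  fixes p v :: "'a::real_normed_vector"
  assumes "openin (top_of_set H) T" and "p \<in> T" and "\<And>t. p + t *\<^sub>R v \<in> H"
  obtains t where "0 < t" "p + t *\<^sub>R v \<in> T"
proof -
  obtain \<epsilon> where "0 < \<epsilon>" and ball: "cball p \<epsilon> \<inter> H \<subseteq> T"
    using assms(1,2) by (force simp: openin_contains_cball)
  define t where "t = \<epsilon> / (norm v + 1)"
  have "0 < norm v + 1" by (simp add: add_nonneg_pos)
  then have "0 < t" using \<open>0 < \<epsilon>\<close> by (simp add: t_def)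
  moreover have "t * norm v \<le> \<epsilon>"
    using \<open>0 < \<epsilon>\<close> \<open>0 < norm v + 1\<close> by (simp add: t_def divide_le_eq)
  then have "p + t *\<^sub>R v \<in> cball p \<epsilon>" using \<open>0 < t\<close> by (simp add: dist_norm)
  ultimately show ?thesis using that ball assms(3) by blast
qed

lemma Int_interior_subset_interior_of:
  "H \<inter> interior K \<subseteq> top_of_set H interior_of (K \<inter> H)"
  using interior_subset by (intro interior_of_maximal) auto

lemma inner_unit_square_less:
  fixes d \<beta> :: "'a::real_inner"
  assumes "norm d < 1" and "norm \<beta> = 1"
  shows "(d \<bullet> \<beta>)\<^sup>2 < 1"
proof -
  have "\<bar>d \<bullet> \<beta>\<bar> < 1" using Cauchy_Schwarz_ineq2 [of d \<beta>] assms by simp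
  then show ?thesis by (simp add: abs_square_less_1)
qed

text \<open>Cauchy--Schwarz for the semi-inner product \<open>u \<bullet> v - (d \<bullet> u) * (d \<bullet> v)\<close>,
  which is positive semidefinite because \<open>norm d < 1\<close>.\<close>
lemma inner_le_cauchy_schwarz_off_direction:
  fixes d \<beta> \<beta>' :: "'a::real_inner"
  assumes "norm d < 1" and "norm \<beta> = 1" and "norm \<beta>' = 1"
  shows "\<beta> \<bullet> \<beta>' \<le> (d \<bullet> \<beta>) * (d \<bullet> \<beta>') + sqrt (1 - (d \<bullet> \<beta>)\<^sup>2) * sqrt (1 - (d \<bullet> \<beta>')\<^sup>2)"
proof -
  define S S' where "S = sqrt (1 - (d \<bullet> \<beta>)\<^sup>2)" and "S' = sqrt (1 - (d \<bullet> \<beta>')\<^sup>2)"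
  define v where "v = S' *\<^sub>R \<beta> - S *\<^sub>R \<beta>'"
  have "(d \<bullet> \<beta>)\<^sup>2 < 1" "(d \<bullet> \<beta>')\<^sup>2 < 1"
    using inner_unit_square_less [OF assms(1)] assms(2,3) by simp_all
  then have sq: "S\<^sup>2 = 1 - (d \<bullet> \<beta>)\<^sup>2" "S'\<^sup>2 = 1 - (d \<bullet> \<beta>')\<^sup>2" "S * S' > 0"
    by (simp_all add: S_def S'_def)
  have "(d \<bullet> v)\<^sup>2 \<le> (norm d * norm v)\<^sup>2"
    using Cauchy_Schwarz_ineq2 [of d v] by (simp add: abs_le_square_iff [symmetric])
  also have "\<dots> \<le> (norm v)\<^sup>2"
    using assms(1) by (simp add: power_mult_distrib mult_left_le_one_le abs_square_le_1)
  also have "\<dots> = v \<bullet> v" by (simp add: power2_norm_eq_inner)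
  finally have "0 \<le> v \<bullet> v - (d \<bullet> v)\<^sup>2" by simp
  also have "\<dots> = S'\<^sup>2 * (1 - (d \<bullet> \<beta>)\<^sup>2) + S\<^sup>2 * (1 - (d \<bullet> \<beta>')\<^sup>2)
      - 2 * (S * S') * (\<beta> \<bullet> \<beta>' - (d \<bullet> \<beta>) * (d \<bullet> \<beta>'))"
  proof -
    have "\<beta> \<bullet> \<beta> = 1" "\<beta>' \<bullet> \<beta>' = 1" using assms(2,3) by (simp_all add: norm_eq_1)
    then have vv: "v \<bullet> v = S'\<^sup>2 - 2 * (S * S') * (\<beta> \<bullet> \<beta>') + S\<^sup>2"
      unfolding v_def inner_diff_left inner_diff_right inner_scaleR_left inner_scaleR_right
      by (simp add: inner_commute [of \<beta>' \<beta>] power2_eq_square algebra_simps)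
    have dv: "d \<bullet> v = S' * (d \<bullet> \<beta>) - S * (d \<bullet> \<beta>')" by (simp add: v_def inner_diff_right)
    show ?thesis unfolding vv dv by (simp add: power2_eq_square algebra_simps)
  qed
  also have "\<dots> = 2 * (S * S') * (S * S' - (\<beta> \<bullet> \<beta>' - (d \<bullet> \<beta>) * (d \<bullet> \<beta>')))"
    unfolding sq(1,2) [symmetric] by (simp add: power2_eq_square algebra_simps)
  finally show ?thesis using sq(3) by (simp add: zero_le_mult_iff S_def S'_def)
qed

lemma exists_interior_point_below:
  fixes K :: "'a::euclidean_space set"
  assumes "convex K" and "q \<in> interior K" and "z \<in> K" and "w \<bullet> z < 0" and "0 \<le> w \<bullet> q"
  obtains \<eta> where "0 < \<eta>" "\<eta> \<le> 1" "z - \<eta> *\<^sub>R (z - q) \<in> interior K" "w \<bullet> (z - \<eta> *\<^sub>R (z - q)) < 0"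
proof -
  define \<eta> where "\<eta> = (w \<bullet> z) / (2 * (w \<bullet> z - w \<bullet> q))"
  have \<eta>: "0 < \<eta>" "\<eta> \<le> 1" using assms(4,5) by (simp_all add: \<eta>_def field_simps)
  have "w \<bullet> (z - \<eta> *\<^sub>R (z - q)) = w \<bullet> z - \<eta> * (w \<bullet> z - w \<bullet> q)"
    by (simp add: inner_diff_right algebra_simps)
  also have "\<dots> = w \<bullet> z / 2" using assms(4,5) by (simp add: \<eta>_def field_simps)
  finally have "w \<bullet> (z - \<eta> *\<^sub>R (z - q)) = w \<bullet> z / 2" .
  then show ?thesis
    using that \<eta> mem_interior_convex_shrink [OF assms(1-3) \<eta>] assms(4) by simp
qed

section \<open>The support function \<open>phi\<close> and its gradient\<close>

locale free_set_setup =
  fixes a lam :: "'n::euclidean_space" and d :: "'m::euclidean_space"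
  assumes norm_a: "norm a = 1" and norm_d: "norm d < 1" and norm_lam: "norm lam = 1"
    and lam_neq: "lam \<noteq> a" "lam \<noteq> - a"
begin

definition "\<gamma> = lam \<bullet> a"
definition "\<omega> = sqrt (1 - \<gamma>\<^sup>2)"
definition "e = lam - \<gamma> *\<^sub>R a"

lemma inner_a_a [simp]: "a \<bullet> a = 1" and inner_lam_lam [simp]: "lam \<bullet> lam = 1"
  using norm_a norm_lam by (simp_all add: norm_eq_1)

lemma inner_lam_a [simp]: "lam \<bullet> a = \<gamma>" "a \<bullet> lam = \<gamma>"
  by (simp_all add: \<gamma>_def inner_commute)

lemma abs_gamma_less: "\<bar>\<gamma>\<bar> < 1"
proof -
  have "\<bar>\<gamma>\<bar> \<le> 1" using Cauchy_Schwarz_ineq2 [of lam a] by (simp add: norm_a norm_lam)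
  moreover have "\<gamma> \<noteq> 1"
  proof
    assume "\<gamma> = 1"
    then have "(lam - a) \<bullet> (lam - a) = 0" by (simp add: inner_diff inner_commute)
    then show False using lam_neq by simp
  qed
  moreover have "\<gamma> \<noteq> -1"
  proof
    assume "\<gamma> = -1"
    then have "(lam + a) \<bullet> (lam + a) = 0" by (simp add: inner_add inner_commute)
    then show False using lam_neq by (simp add: add_eq_0_iff2)
  qed
  ultimately show ?thesis by linarith
qed

lemma gamma_square_less: "\<gamma>\<^sup>2 < 1"
  using abs_gamma_less by (simp add: abs_square_less_1)

lemma omega_pos: "0 < \<omega>" and omega_square: "\<omega>\<^sup>2 = 1 - \<gamma>\<^sup>2"
  using gamma_square_less by (simp_all add: \<omega>_def)

lemma inner_a_e [simp]: "a \<bullet> e = 0" and inner_lam_e [simp]: "lam \<bullet> e = \<omega>\<^sup>2"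
  and inner_e_e [simp]: "e \<bullet> e = \<omega>\<^sup>2"
  by (simp_all add: e_def inner_diff inner_commute power2_eq_square omega_square [unfolded power2_eq_square])

text \<open>With \<open>r = sqrt (t\<^sup>2 - s\<^sup>2)\<close> the maximiser is \<open>x = s a + (r / \<omega>) e\<close>; the Lagrange identity
  \<open>lam = (\<omega> / r) x + \<nu> a\<close> with multiplier \<open>\<nu> \<ge> 0\<close> bounds every feasible value.\<close>
lemma Sup_inner_lam_active:
  assumes st: "\<bar>s\<bar> < t" and active: "s < \<gamma> * t"
  shows "Sup {lam \<bullet> x | x. norm x \<le> t \<and> a \<bullet> x \<le> s} = \<gamma> * s + \<omega> * sqrt (t\<^sup>2 - s\<^sup>2)"
proof (rule cSup_eq_maximum)
  define r where "r = sqrt (t\<^sup>2 - s\<^sup>2)"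
  define xs where "xs = s *\<^sub>R a + (r / \<omega>) *\<^sub>R e"
  define \<nu> where "\<nu> = \<gamma> - (\<omega> / r) * s"
  have "0 < t" using st by linarith
  have "s\<^sup>2 < t\<^sup>2" using power_strict_mono [of "\<bar>s\<bar>" t 2] st by simp
  then have "0 < r" and r2: "r\<^sup>2 = t\<^sup>2 - s\<^sup>2" by (simp_all add: r_def)
  have "norm xs = t"
  proof -
    have "xs \<bullet> xs = t\<^sup>2" using omega_pos r2 by (simp add: xs_def inner_add inner_commute power2_eq_square)
    then show ?thesis using \<open>0 < t\<close> by (simp add: norm_eq_sqrt_inner)
  qed
  moreover have "a \<bullet> xs = s" by (simp add: xs_def inner_add_right)
  moreover have "lam \<bullet> xs = \<gamma> * s + \<omega> * r"
    using omega_pos by (simp add: xs_def inner_add_right power2_eq_square)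
  ultimately show "\<gamma> * s + \<omega> * sqrt (t\<^sup>2 - s\<^sup>2) \<in> {lam \<bullet> x | x. norm x \<le> t \<and> a \<bullet> x \<le> s}"
    unfolding r_def [symmetric] by (intro CollectI exI [of _ xs]) simp
  have "(s / t)\<^sup>2 < 1" using \<open>s\<^sup>2 < t\<^sup>2\<close> \<open>0 < t\<close> by (simp add: power_divide)
  then have "(s / t) * \<omega> \<le> \<gamma> * sqrt (1 - (s / t)\<^sup>2)"
    unfolding \<omega>_def using active \<open>0 < t\<close> gamma_square_less
    by (intro cross_sqrt_one_minus_square_le) (auto simp: field_simps)
  also have "sqrt (1 - (s / t)\<^sup>2) = r / t"
    using \<open>0 < t\<close> by (simp add: r_def power_divide field_simps real_sqrt_divide)
  finally have "0 \<le> \<nu>" using \<open>0 < t\<close> \<open>0 < r\<close> by (simp add: \<nu>_def field_simps)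
  fix v assume "v \<in> {lam \<bullet> x | x. norm x \<le> t \<and> a \<bullet> x \<le> s}"
  then obtain x where x: "v = lam \<bullet> x" "norm x \<le> t" "a \<bullet> x \<le> s" by auto
  have "lam = (\<omega> / r) *\<^sub>R xs + \<nu> *\<^sub>R a"
    using \<open>0 < r\<close> omega_pos by (simp add: xs_def \<nu>_def e_def algebra_simps)
  then have "v = ((\<omega> / r) *\<^sub>R xs + \<nu> *\<^sub>R a) \<bullet> x" unfolding x(1) by (rule arg_cong)
  also have "\<dots> = (\<omega> / r) * (xs \<bullet> x) + \<nu> * (a \<bullet> x)" by (simp add: inner_add_left)
  also have "\<dots> \<le> (\<omega> / r) * (t * t) + \<nu> * s"
  proof (intro add_mono mult_left_mono)
    have "xs \<bullet> x \<le> norm xs * norm x" by (rule norm_cauchy_schwarz)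
    also have "\<dots> \<le> t * t" using \<open>norm xs = t\<close> x(2) \<open>0 < t\<close> by (simp add: mult_left_mono)
    finally show "xs \<bullet> x \<le> t * t" .
  qed (use x(3) \<open>0 \<le> \<nu>\<close> \<open>0 < r\<close> omega_pos in auto)
  also have "\<dots> = (\<omega> / r) * (r * r + s * s) + \<nu> * s" using r2 by (simp add: power2_eq_square)
  also have "\<dots> = \<gamma> * s + \<omega> * r" using \<open>0 < r\<close> by (simp add: \<nu>_def field_simps)
  finally show "v \<le> \<gamma> * s + \<omega> * sqrt (t\<^sup>2 - s\<^sup>2)" unfolding r_def .
qed

lemma Sup_inner_lam_inactive:
  assumes "0 < t" and "\<gamma> * t \<le> s"
  shows "Sup {lam \<bullet> x | x. norm x \<le> t \<and> a \<bullet> x \<le> s} = t"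
proof (rule cSup_eq_maximum)
  show "t \<in> {lam \<bullet> x | x. norm x \<le> t \<and> a \<bullet> x \<le> s}"
    using assms by (intro CollectI exI [of _ "t *\<^sub>R lam"]) (auto simp: norm_lam mult.commute)
  fix v assume "v \<in> {lam \<bullet> x | x. norm x \<le> t \<and> a \<bullet> x \<le> s}"
  then obtain x where "v = lam \<bullet> x" "norm x \<le> t" by auto
  then show "v \<le> t" using norm_cauchy_schwarz [of lam x] norm_lam by simp
qed

definition "phi_smooth y = - \<gamma> * (d \<bullet> y) + \<omega> * sqrt (y \<bullet> y - (d \<bullet> y)\<^sup>2)"

lemma phi_eq:
  assumes "y \<noteq> 0"
  shows "phi lam a d y = (if \<gamma> * norm y \<le> - (d \<bullet> y) then norm y else phi_smooth y)"
proof -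
  have "\<bar>d \<bullet> y\<bar> \<le> norm d * norm y" by (rule Cauchy_Schwarz_ineq2)
  also have "\<dots> < norm y" using norm_d assms by simp
  finally have bound: "\<bar>- (d \<bullet> y)\<bar> < norm y" by simp
  have "{lam \<bullet> x |x. norm x \<le> norm y \<and> a \<bullet> x + d \<bullet> y \<le> 0} =
      {lam \<bullet> x |x. norm x \<le> norm y \<and> a \<bullet> x \<le> - (d \<bullet> y)}"
    by (auto simp: algebra_simps)
  then have phi: "phi lam a d y = Sup {lam \<bullet> x |x. norm x \<le> norm y \<and> a \<bullet> x \<le> - (d \<bullet> y)}"
    by (simp add: phi_def)
  show ?thesis
  proof (cases "\<gamma> * norm y \<le> - (d \<bullet> y)")
    case True
    then show ?thesis using Sup_inner_lam_inactive [of "norm y"] assms by (simp add: phi)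
  next
    case False
    then show ?thesis using Sup_inner_lam_active [OF bound]
      by (simp add: phi phi_smooth_def power2_norm_eq_inner)
  qed
qed

lemma phi_smooth_le_norm: "phi_smooth y \<le> norm y"
proof -
  define s r where "s = - (d \<bullet> y)" and "r = sqrt ((norm y)\<^sup>2 - s\<^sup>2)"
  have "\<bar>s\<bar> \<le> norm d * norm y" unfolding s_def by (simp add: Cauchy_Schwarz_ineq2)
  also have "\<dots> \<le> norm y" using norm_d by (simp add: mult_left_le_one_le)
  finally have "\<bar>s\<bar> \<le> norm y" .
  then have r2: "r\<^sup>2 = (norm y)\<^sup>2 - s\<^sup>2" using abs_le_square_iff [of s "norm y"] by (simp add: r_def)
  have "(\<gamma> * s + \<omega> * r)\<^sup>2 \<le> (\<gamma> * s + \<omega> * r)\<^sup>2 + (\<gamma> * r - \<omega> * s)\<^sup>2" by simp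
  also have "\<dots> = (\<gamma>\<^sup>2 + \<omega>\<^sup>2) * (s\<^sup>2 + r\<^sup>2)" by (simp add: power2_eq_square algebra_simps)
  also have "\<dots> = (norm y)\<^sup>2" using omega_square r2 by simp
  finally have "\<gamma> * s + \<omega> * r \<le> norm y" by (simp add: abs_le_square_iff [symmetric] abs_le_iff)
  then show ?thesis by (simp add: phi_smooth_def s_def r_def power2_norm_eq_inner)
qed

definition "dcos \<beta> = sqrt (1 - (d \<bullet> \<beta>)\<^sup>2)"

lemma dcos_pos: "norm \<beta> = 1 \<Longrightarrow> 0 < dcos \<beta>"
  and dcos_square: "norm \<beta> = 1 \<Longrightarrow> (dcos \<beta>)\<^sup>2 = 1 - (d \<bullet> \<beta>)\<^sup>2"
  using inner_unit_square_less [OF norm_d, of \<beta>] by (simp_all add: dcos_def)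

lemma has_derivative_phi_smooth:
  assumes "norm \<beta> = 1"
  shows "(phi_smooth has_derivative
      (\<lambda>h. ((\<omega> / dcos \<beta>) *\<^sub>R \<beta> - (\<gamma> + \<omega> / dcos \<beta> * (d \<bullet> \<beta>)) *\<^sub>R d) \<bullet> h)) (at \<beta>)"
proof -
  let ?q = "\<lambda>y. y \<bullet> y - (d \<bullet> y) * (d \<bullet> y)"
  have "\<beta> \<bullet> \<beta> = 1" using assms by (simp add: norm_eq_1)
  then have q\<beta>: "sqrt (?q \<beta>) = dcos \<beta>" and "0 < ?q \<beta>"
    using inner_unit_square_less [OF norm_d assms] by (simp_all add: dcos_def power2_eq_square)
  have "((\<lambda>y. y \<bullet> y) has_derivative (\<lambda>h. 2 * (\<beta> \<bullet> h))) (at \<beta>)"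
    using has_derivative_inner [OF has_derivative_ident has_derivative_ident, of \<beta> UNIV]
    by (simp add: inner_commute)
  moreover have d: "((\<lambda>y. d \<bullet> y) has_derivative (\<lambda>h. d \<bullet> h)) (at \<beta>)"
    by (rule has_derivative_inner_right [OF has_derivative_ident])
  ultimately have "(?q has_derivative (\<lambda>h. 2 * (\<beta> \<bullet> h) - 2 * (d \<bullet> \<beta>) * (d \<bullet> h))) (at \<beta>)"
    using has_derivative_diff [OF _ has_derivative_mult [OF d d]] by (simp add: algebra_simps)
  then have sqrt_q: "((\<lambda>y. sqrt (?q y)) has_derivative
      (\<lambda>h. (2 * (\<beta> \<bullet> h) - 2 * (d \<bullet> \<beta>) * (d \<bullet> h)) * (inverse (dcos \<beta>) / 2))) (at \<beta>)"
    using DERIV_compose_FDERIV [where g = ?q, OF DERIV_real_sqrt [OF \<open>0 < ?q \<beta>\<close>]] q\<beta> by simp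
  have "(phi_smooth has_derivative (\<lambda>h. - \<gamma> * (d \<bullet> h)
      + \<omega> * ((2 * (\<beta> \<bullet> h) - 2 * (d \<bullet> \<beta>) * (d \<bullet> h)) * (inverse (dcos \<beta>) / 2)))) (at \<beta>)"
    unfolding phi_smooth_def power2_eq_square
    using has_derivative_add [OF has_derivative_mult_right [OF d, of "- \<gamma>"] has_derivative_mult_right [OF sqrt_q, of \<omega>]]
    by simp
  then show ?thesis
    by (rule has_derivative_eq_rhs) (use dcos_pos [OF assms] in \<open>auto simp: inner_diff_left field_simps\<close>)
qed

definition "\<kappa> \<beta> = (if \<gamma> + d \<bullet> \<beta> \<le> 0 then 1 else \<omega> / dcos \<beta>)"
definition "\<mu> \<beta> = (if \<gamma> + d \<bullet> \<beta> \<le> 0 then 0 else \<gamma> + \<kappa> \<beta> * (d \<bullet> \<beta>))"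
definition "gphi \<beta> = \<kappa> \<beta> *\<^sub>R \<beta> - \<mu> \<beta> *\<^sub>R d"

lemma has_derivative_phi:
  assumes \<beta>: "norm \<beta> = 1"
  shows "(phi lam a d has_derivative (\<lambda>h. gphi \<beta> \<bullet> h)) (at \<beta>)"
proof -
  have "\<beta> \<noteq> 0" using \<beta> by auto
  have norm_deriv: "(norm has_derivative (\<lambda>h. \<beta> \<bullet> h)) (at \<beta>)"
    using has_derivative_norm [OF \<open>\<beta> \<noteq> 0\<close>] \<beta> by (simp add: sgn_div_norm inner_commute)
  have "((\<lambda>y. \<gamma> * norm y + d \<bullet> y) \<longlongrightarrow> \<gamma> + d \<bullet> \<beta>) (at \<beta>)"
    using \<beta> by (auto intro!: tendsto_eq_intros)
  note switch = order_tendstoD [OF this]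
  have nonzero: "\<forall>\<^sub>F y in at \<beta>. y \<noteq> 0" by (rule eventually_neq_at_within)
  consider "\<gamma> + d \<bullet> \<beta> < 0" | "\<gamma> + d \<bullet> \<beta> > 0" | "\<gamma> + d \<bullet> \<beta> = 0" by linarith
  then show ?thesis
  proof cases
    case 1
    then have "gphi \<beta> = \<beta>" by (simp add: gphi_def \<kappa>_def \<mu>_def)
    moreover have "\<forall>\<^sub>F y in at \<beta>. norm y = phi lam a d y"
      using switch(2) [OF 1] nonzero by eventually_elim (simp add: phi_eq)
    moreover have "norm \<beta> = phi lam a d \<beta>" using 1 \<beta> \<open>\<beta> \<noteq> 0\<close> by (simp add: phi_eq)
    ultimately show ?thesis using has_derivative_transform_eventually [OF norm_deriv] by simp
  next
    case 2
    then have "gphi \<beta> = (\<omega> / dcos \<beta>) *\<^sub>R \<beta> - (\<gamma> + \<omega> / dcos \<beta> * (d \<bullet> \<beta>)) *\<^sub>R d"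
      by (simp add: gphi_def \<kappa>_def \<mu>_def)
    moreover have "\<forall>\<^sub>F y in at \<beta>. phi_smooth y = phi lam a d y"
      using switch(1) [OF 2] nonzero by eventually_elim (simp add: phi_eq)
    moreover have "phi_smooth \<beta> = phi lam a d \<beta>" using 2 \<beta> \<open>\<beta> \<noteq> 0\<close> by (simp add: phi_eq)
    ultimately show ?thesis
      using has_derivative_transform_eventually [OF has_derivative_phi_smooth [OF \<beta>]] by simp
  next
    case 3
    text \<open>On the switching surface both branches have the same value and gradient,
      and \<open>phi\<close> is squeezed between them.\<close>
    then have "dcos \<beta> = \<omega>" by (simp add: dcos_def \<omega>_def eq_neg_iff_add_eq_0 [symmetric])
    then have smooth_deriv: "(phi_smooth has_derivative (\<lambda>h. \<beta> \<bullet> h)) (at \<beta>)"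
      using has_derivative_phi_smooth [OF \<beta>] 3 omega_pos by simp
    have "gphi \<beta> = \<beta>" using 3 by (simp add: gphi_def \<kappa>_def \<mu>_def)
    moreover have "\<forall>\<^sub>F y in at \<beta>. phi_smooth y \<le> phi lam a d y \<and> phi lam a d y \<le> norm y"
      using nonzero by eventually_elim (simp add: phi_eq phi_smooth_le_norm)
    moreover have "phi lam a d \<beta> = norm \<beta>" using 3 \<beta> \<open>\<beta> \<noteq> 0\<close> by (simp add: phi_eq)
    moreover have "phi_smooth \<beta> = norm \<beta>"
    proof -
      have "\<beta> \<bullet> \<beta> = 1" using \<beta> by (simp add: norm_eq_1)
      then have "phi_smooth \<beta> = - \<gamma> * (d \<bullet> \<beta>) + \<omega> * dcos \<beta>" by (simp add: phi_smooth_def dcos_def)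
      also have "\<dots> = \<gamma>\<^sup>2 + \<omega>\<^sup>2"
        using 3 \<open>dcos \<beta> = \<omega>\<close> by (simp add: power2_eq_square eq_neg_iff_add_eq_0 [symmetric])
      finally show ?thesis using omega_square \<beta> by simp
    qed
    ultimately show ?thesis using has_derivative_squeeze [OF smooth_deriv norm_deriv] by simp
  qed
qed

lemma rfun_eq_mu:
  assumes \<beta>: "norm \<beta> = 1"
  shows "rfun lam a d \<beta> = \<mu> \<beta>"
proof (cases "\<gamma> + d \<bullet> \<beta> \<le> 0")
  case True
  then show ?thesis by (simp add: rfun_def \<mu>_def)
next
  case False
  have "\<beta> \<bullet> \<beta> = 1" using \<beta> by (simp add: norm_eq_1)
  then have phi_\<beta>: "phi lam a d \<beta> = - \<gamma> * (d \<bullet> \<beta>) + \<omega> * dcos \<beta>"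
    using False \<beta> phi_eq [of \<beta>] by (fastforce simp: phi_smooth_def dcos_def)
  then have den: "phi lam a d \<beta> + d \<bullet> \<beta> * \<gamma> = \<omega> * dcos \<beta>" by simp
  have "d \<bullet> \<beta> + \<gamma> * phi lam a d \<beta> = (d \<bullet> \<beta>) * \<omega>\<^sup>2 + \<gamma> * \<omega> * dcos \<beta>"
    unfolding phi_\<beta> omega_square by (simp add: algebra_simps power2_eq_square)
  also have "\<dots> = (\<gamma> + \<omega> / dcos \<beta> * (d \<bullet> \<beta>)) * (\<omega> * dcos \<beta>)"
    using dcos_pos [OF \<beta>] by (simp add: field_simps power2_eq_square)
  finally have "d \<bullet> \<beta> + \<gamma> * phi lam a d \<beta> = (\<gamma> + \<omega> / dcos \<beta> * (d \<bullet> \<beta>)) * (\<omega> * dcos \<beta>)" .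
  moreover have "\<omega> * dcos \<beta> \<noteq> 0" using dcos_pos [OF \<beta>] omega_pos by simp
  ultimately show ?thesis using False den by (simp add: rfun_def \<mu>_def \<kappa>_def)
qed

lemma grad_phi: "norm \<beta> = 1 \<Longrightarrow> grad (phi lam a d) \<beta> = gphi \<beta>"
  by (intro grad_eqI has_derivative_phi)

definition "dir \<beta> = (if \<gamma> + d \<bullet> \<beta> \<le> 0 then lam else (dcos \<beta> / \<omega>) *\<^sub>R e - (d \<bullet> \<beta>) *\<^sub>R a)"

lemma kappa_pos: "norm \<beta> = 1 \<Longrightarrow> 0 < \<kappa> \<beta>"
  using dcos_pos omega_pos by (simp add: \<kappa>_def)

lemma mu_nonneg:
  assumes \<beta>: "norm \<beta> = 1"
  shows "0 \<le> \<mu> \<beta>"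
proof (cases "\<gamma> + d \<bullet> \<beta> \<le> 0")
  case False
  have "(- (d \<bullet> \<beta>)) * sqrt (1 - \<gamma>\<^sup>2) \<le> \<gamma> * sqrt (1 - (- (d \<bullet> \<beta>))\<^sup>2)"
    using False gamma_square_less inner_unit_square_less [OF norm_d \<beta>]
    by (intro cross_sqrt_one_minus_square_le) auto
  then have "0 \<le> (\<gamma> * dcos \<beta> + \<omega> * (d \<bullet> \<beta>)) / dcos \<beta>"
    using dcos_pos [OF \<beta>] by (simp add: dcos_def \<omega>_def algebra_simps)
  also have "\<dots> = \<mu> \<beta>" using False dcos_pos [OF \<beta>] by (simp add: \<mu>_def \<kappa>_def field_simps)
  finally show ?thesis .
qed (simp add: \<mu>_def)

text \<open>\<open>dir \<beta>\<close> is the maximiser in the definition of \<open>phi \<beta>\<close>; this decomposition of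
  \<open>lam\<close> is the first-order optimality condition, with \<open>\<mu> \<beta>\<close> as Lagrange multiplier.\<close>
lemma lam_decomposition: "norm \<beta> = 1 \<Longrightarrow> lam = \<kappa> \<beta> *\<^sub>R dir \<beta> + \<mu> \<beta> *\<^sub>R a"
  using dcos_pos [of \<beta>] omega_pos
  by (auto simp: dir_def \<kappa>_def \<mu>_def e_def algebra_simps)

lemma norm_dir: "norm \<beta> = 1 \<Longrightarrow> norm (dir \<beta>) = 1"
proof -
  assume \<beta>: "norm \<beta> = 1"
  have "dir \<beta> \<bullet> dir \<beta> = 1"
  proof (cases "\<gamma> + d \<bullet> \<beta> \<le> 0")
    case False
    then show ?thesis using omega_pos dcos_square [OF \<beta>]
      by (simp add: dir_def inner_diff inner_commute power2_eq_square)
  qed (simp add: dir_def)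
  then show ?thesis by (simp add: norm_eq_1)
qed

lemma inner_dir_e_pos: "norm \<beta> = 1 \<Longrightarrow> 0 < dir \<beta> \<bullet> e"
  using omega_pos dcos_pos [of \<beta>] by (simp add: dir_def inner_diff_left power2_eq_square)

lemma inner_a_dir: "a \<bullet> dir \<beta> + d \<bullet> \<beta> = (if \<gamma> + d \<bullet> \<beta> \<le> 0 then \<gamma> + d \<bullet> \<beta> else 0)"
  by (simp add: dir_def inner_diff_right)

lemma gphi_inner_eq:
  assumes "norm \<beta> = 1"
  shows "- (lam \<bullet> x) + gphi \<beta> \<bullet> y = \<kappa> \<beta> * (\<beta> \<bullet> y - dir \<beta> \<bullet> x) - \<mu> \<beta> * (a \<bullet> x + d \<bullet> y)"
proof -
  have "lam \<bullet> x = \<kappa> \<beta> * (dir \<beta> \<bullet> x) + \<mu> \<beta> * (a \<bullet> x)"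
    by (subst lam_decomposition [OF assms]) (simp add: inner_add_left)
  then show ?thesis by (simp add: gphi_def inner_diff_left algebra_simps)
qed

lemma norm_gphi_le:
  assumes \<beta>: "norm \<beta> = 1"
  shows "norm (gphi \<beta>) \<le> 1"
proof (cases "\<gamma> + d \<bullet> \<beta> \<le> 0")
  case True
  then show ?thesis using \<beta> by (simp add: gphi_def \<kappa>_def \<mu>_def)
next
  case False
  define k m \<sigma> where "k = \<kappa> \<beta>" and "m = \<mu> \<beta>" and "\<sigma> = d \<bullet> \<beta>"
  have "lam - m *\<^sub>R a = k *\<^sub>R dir \<beta>"
    using arg_cong [OF lam_decomposition [OF \<beta>], of "\<lambda>v. v - m *\<^sub>R a"] by (simp add: k_def m_def)
  then have "k\<^sup>2 = (norm (lam - m *\<^sub>R a))\<^sup>2"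
    using norm_dir [OF \<beta>] kappa_pos [OF \<beta>] by (simp add: k_def)
  also have "\<dots> = 1 - 2 * m * \<gamma> + m\<^sup>2"
    unfolding power2_norm_eq_inner by (simp add: inner_diff power2_eq_square algebra_simps)
  finally have k2: "k\<^sup>2 = 1 - 2 * m * \<gamma> + m\<^sup>2" .
  have k\<sigma>: "k * \<sigma> = m - \<gamma>" using False by (simp add: k_def m_def \<sigma>_def \<mu>_def)
  have "gphi \<beta> \<bullet> gphi \<beta> = k\<^sup>2 * (\<beta> \<bullet> \<beta>) - 2 * m * (k * \<sigma>) + m\<^sup>2 * (d \<bullet> d)"
    by (simp add: gphi_def k_def m_def \<sigma>_def inner_diff inner_commute power2_eq_square algebra_simps)
  also have "\<dots> = 1 - m\<^sup>2 * (1 - d \<bullet> d)"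
    unfolding k2 k\<sigma> using \<beta> by (simp add: norm_eq_1 power2_eq_square algebra_simps)
  also have "\<dots> \<le> 1"
    using norm_d by (simp add: power2_norm_eq_inner [symmetric] abs_square_le_1 less_imp_le)
  finally show ?thesis by (simp add: norm_eq_sqrt_inner)
qed

lemma inner_le_inner_dir:
  assumes \<beta>: "norm \<beta> = 1" and \<beta>': "norm \<beta>' = 1"
  shows "\<beta> \<bullet> \<beta>' \<le> dir \<beta> \<bullet> dir \<beta>'"
proof -
  have cs: "\<beta> \<bullet> \<beta>' \<le> (d \<bullet> \<beta>) * (d \<bullet> \<beta>') + dcos \<beta> * dcos \<beta>'"
    using inner_le_cauchy_schwarz_off_direction [OF norm_d \<beta> \<beta>'] by (simp add: dcos_def)
  have mixed: "u \<bullet> w \<le> lam \<bullet> dir w"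
    if "norm u = 1" "norm w = 1" "\<gamma> + d \<bullet> u \<le> 0" "\<not> \<gamma> + d \<bullet> w \<le> 0" for u w
  proof -
    have "u \<bullet> w \<le> (d \<bullet> u) * (d \<bullet> w) + dcos u * dcos w"
      using inner_le_cauchy_schwarz_off_direction [OF norm_d that(1,2)] by (simp add: dcos_def)
    also have "\<dots> \<le> (- \<gamma>) * (d \<bullet> w) + \<omega> * dcos w"
      using semicircle_inner_mono [of "d \<bullet> u" "- \<gamma>" "d \<bullet> w"] that gamma_square_less
        inner_unit_square_less [OF norm_d that(1)] inner_unit_square_less [OF norm_d that(2)]
      by (simp add: dcos_def \<omega>_def)
    also have "\<dots> = lam \<bullet> dir w"
      using that(4) omega_pos by (simp add: dir_def inner_diff_right power2_eq_square)
    finally show ?thesis .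
  qed
  show ?thesis
  proof (cases "\<gamma> + d \<bullet> \<beta> \<le> 0"; cases "\<gamma> + d \<bullet> \<beta>' \<le> 0")
    assume "\<gamma> + d \<bullet> \<beta> \<le> 0" "\<gamma> + d \<bullet> \<beta>' \<le> 0"
    then show ?thesis using norm_cauchy_schwarz [of \<beta> \<beta>'] \<beta> \<beta>' by (simp add: dir_def)
  next
    assume "\<gamma> + d \<bullet> \<beta> \<le> 0" "\<not> \<gamma> + d \<bullet> \<beta>' \<le> 0"
    then show ?thesis using mixed [OF \<beta> \<beta>'] by (simp add: dir_def)
  next
    assume "\<not> \<gamma> + d \<bullet> \<beta> \<le> 0" "\<gamma> + d \<bullet> \<beta>' \<le> 0"
    then show ?thesis using mixed [OF \<beta>' \<beta>] by (simp add: dir_def inner_commute)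
  next
    assume "\<not> \<gamma> + d \<bullet> \<beta> \<le> 0" "\<not> \<gamma> + d \<bullet> \<beta>' \<le> 0"
    then show ?thesis using cs omega_pos
      by (simp add: dir_def inner_commute power2_eq_square algebra_simps)
  qed
qed

section \<open>Freeness and maximality of \<open>C\<close>\<close>

definition "Hset = {p :: 'n \<times> 'm. (a, d) \<bullet> p = -1}"
definition "Sset = {(x :: 'n, y :: 'm). norm x \<le> norm y \<and> a \<bullet> x + d \<bullet> y \<le> 0}"
definition "Cset = (\<Inter>\<beta>\<in>{\<beta>. norm \<beta> = 1}. {p :: 'n \<times> 'm. (- lam, gphi \<beta>) \<bullet> p \<le> \<mu> \<beta>})"

lemma mem_Hset [simp]: "(x, y) \<in> Hset \<longleftrightarrow> a \<bullet> x + d \<bullet> y = -1"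
  by (simp add: Hset_def)

lemma mem_Cset: "(x, y) \<in> Cset \<longleftrightarrow> (\<forall>\<beta>. norm \<beta> = 1 \<longrightarrow> - (lam \<bullet> x) + gphi \<beta> \<bullet> y \<le> \<mu> \<beta>)"
  by (simp add: Cset_def)

lemma closed_Cset: "closed Cset" and convex_Cset: "convex Cset"
  unfolding Cset_def by (intro closed_INT convex_INT ballI closed_halfspace_le convex_halfspace_le)+

lemma mem_Cset_Hset:
  assumes "(x, y) \<in> Hset"
  shows "(x, y) \<in> Cset \<longleftrightarrow> (\<forall>\<beta>. norm \<beta> = 1 \<longrightarrow> \<beta> \<bullet> y \<le> dir \<beta> \<bullet> x)"
proof -
  have "- (lam \<bullet> x) + gphi \<beta> \<bullet> y \<le> \<mu> \<beta> \<longleftrightarrow> \<beta> \<bullet> y \<le> dir \<beta> \<bullet> x" if "norm \<beta> = 1" for \<beta>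
    unfolding gphi_inner_eq [OF that] using assms kappa_pos [OF that] by (simp add: mult_le_0_iff)
  then show ?thesis by (auto simp: mem_Cset)
qed

lemma Cset_S_free: "S_free_wrt Sset Hset Cset"
  unfolding S_free_wrt_def
proof (rule ccontr)
  assume "(top_of_set Hset interior_of (Cset \<inter> Hset)) \<inter> (Sset \<inter> Hset) \<noteq> {}"
  then obtain x y where "(x, y) \<in> top_of_set Hset interior_of (Cset \<inter> Hset)"
    and "norm x \<le> norm y" and H: "a \<bullet> x + d \<bullet> y = -1"
    by (auto simp: Sset_def)
  then obtain T where T: "openin (top_of_set Hset) T" "(x, y) \<in> T" "T \<subseteq> Cset \<inter> Hset"
    by (auto simp: interior_of_def)
  have "y \<noteq> 0" using \<open>norm x \<le> norm y\<close> H by auto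
  define \<beta> where "\<beta> = y /\<^sub>R norm y"
  have \<beta>: "norm \<beta> = 1" "\<beta> \<bullet> y = norm y"
    using \<open>y \<noteq> 0\<close> by (simp_all add: \<beta>_def power2_norm_eq_inner [symmetric] power2_eq_square)
  text \<open>Moving \<open>x\<close> against \<open>e\<close> stays in the hyperplane but violates the constraint of \<open>\<beta>\<close>.\<close>
  have "(x, y) + t *\<^sub>R (- e, 0) \<in> Hset" for t using H by (simp add: inner_diff_right)
  then obtain t where "0 < t" "(x, y) + t *\<^sub>R (- e, 0) \<in> T"
    using openin_ray_exits_not_immediately [OF T(1,2)] by blast
  then have "(x - t *\<^sub>R e, y) \<in> Cset \<inter> Hset" using T(3) by auto
  then have "\<beta> \<bullet> y \<le> dir \<beta> \<bullet> (x - t *\<^sub>R e)" using mem_Cset_Hset \<beta>(1) by blast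
  also have "\<dots> < dir \<beta> \<bullet> x"
    using inner_dir_e_pos [OF \<beta>(1)] \<open>0 < t\<close> by (simp add: inner_diff_right)
  also have "\<dots> \<le> norm x" using norm_cauchy_schwarz [of "dir \<beta>" x] norm_dir [OF \<beta>(1)] by simp
  finally show False using \<open>norm x \<le> norm y\<close> \<beta>(2) by simp
qed

lemma interior_Cset: "norm y < lam \<bullet> x \<Longrightarrow> (x, y) \<in> interior Cset"
proof -
  assume "norm y < lam \<bullet> x"
  let ?U = "{p :: 'n \<times> 'm. norm (snd p) < lam \<bullet> fst p}"
  have "open ?U" by (intro open_Collect_less continuous_intros)
  moreover have "?U \<subseteq> Cset"
  proof (clarsimp simp: mem_Cset)
    fix x :: 'n and y \<beta> :: 'm
    assume "norm y < lam \<bullet> x" "norm \<beta> = 1"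
    have "gphi \<beta> \<bullet> y \<le> norm (gphi \<beta>) * norm y" by (rule norm_cauchy_schwarz)
    also have "\<dots> \<le> norm y" using norm_gphi_le [OF \<open>norm \<beta> = 1\<close>] by (simp add: mult_left_le_one_le)
    finally show "gphi \<beta> \<bullet> y - lam \<bullet> x \<le> \<mu> \<beta>"
      using \<open>norm y < lam \<bullet> x\<close> mu_nonneg [OF \<open>norm \<beta> = 1\<close>] by linarith
  qed
  ultimately have "?U \<subseteq> interior Cset" by (rule interior_maximal [rotated])
  then show ?thesis using \<open>norm y < lam \<bullet> x\<close> by auto
qed

definition "x\<^sub>0 = (1 / \<omega>\<^sup>2) *\<^sub>R e - a"

lemma base_point: "(x\<^sub>0, 0) \<in> Hset" "(x\<^sub>0, 0) \<in> interior Cset"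
proof -
  show "(x\<^sub>0, 0) \<in> Hset" by (simp add: x\<^sub>0_def inner_diff_right)
  have "lam \<bullet> x\<^sub>0 = 1 - \<gamma>" using omega_pos by (simp add: x\<^sub>0_def inner_diff_right)
  then show "(x\<^sub>0, 0) \<in> interior Cset" using abs_gamma_less by (intro interior_Cset) simp
qed

lemma Cset_add_ray:
  assumes \<beta>: "norm \<beta> = 1" and "0 \<le> \<gamma> + d \<bullet> \<beta>" and "(x, y) \<in> Cset" and "0 \<le> \<tau>"
  shows "(x, y) + \<tau> *\<^sub>R (dir \<beta>, \<beta>) \<in> Cset"
proof -
  have "- (lam \<bullet> (x + \<tau> *\<^sub>R dir \<beta>)) + gphi \<beta>' \<bullet> (y + \<tau> *\<^sub>R \<beta>) \<le> \<mu> \<beta>'" if \<beta>': "norm \<beta>' = 1" for \<beta>'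
  proof -
    have "a \<bullet> dir \<beta> + d \<bullet> \<beta> = 0" using inner_a_dir [of \<beta>] assms(2) by simp
    then have "- (lam \<bullet> dir \<beta>) + gphi \<beta>' \<bullet> \<beta> = \<kappa> \<beta>' * (\<beta>' \<bullet> \<beta> - dir \<beta>' \<bullet> dir \<beta>)"
      using gphi_inner_eq [OF \<beta>', of "dir \<beta>" \<beta>] by simp
    also have "\<dots> \<le> 0"
      using inner_le_inner_dir [OF \<beta>' \<beta>] kappa_pos [OF \<beta>'] by (simp add: mult_le_0_iff)
    finally have "\<tau> * (- (lam \<bullet> dir \<beta>) + gphi \<beta>' \<bullet> \<beta>) \<le> 0"
      using assms(4) by (simp add: mult_nonneg_nonpos)
    moreover have "- (lam \<bullet> x) + gphi \<beta>' \<bullet> y \<le> \<mu> \<beta>'" using assms(3) \<beta>' by (simp add: mem_Cset)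
    ultimately show ?thesis by (simp add: inner_add_right algebra_simps)
  qed
  then show ?thesis by (simp add: mem_Cset)
qed

lemma interior_Cset_add_ray:
  assumes "norm \<beta> = 1" and "0 \<le> \<gamma> + d \<bullet> \<beta>" and "q \<in> interior Cset" and "0 \<le> \<tau>"
  shows "q + \<tau> *\<^sub>R (dir \<beta>, \<beta>) \<in> interior Cset"
proof -
  let ?v = "\<tau> *\<^sub>R (dir \<beta>, \<beta>)"
  have "(+) ?v ` Cset \<subseteq> Cset" using Cset_add_ray [OF assms(1,2) _ assms(4)] by (auto simp: add.commute)
  then have "(+) ?v ` interior Cset \<subseteq> interior Cset" by (metis interior_mono interior_translation)
  then show ?thesis using assms(3) by (auto simp: add.commute)
qed

lemma light_point_mem_Cset_Hset:
  assumes \<beta>: "norm \<beta> = 1" and "\<gamma> + d \<bullet> \<beta> < 0"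
  defines "g \<equiv> - (\<gamma> + d \<bullet> \<beta>)"
  shows "(dir \<beta> /\<^sub>R g, \<beta> /\<^sub>R g) \<in> Cset \<inter> Hset"
proof -
  have "0 < g" using assms(2) by (simp add: g_def)
  have "a \<bullet> dir \<beta> + d \<bullet> \<beta> = - g" using inner_a_dir [of \<beta>] assms(2) by (simp add: g_def)
  then have "a \<bullet> (dir \<beta> /\<^sub>R g) + d \<bullet> (\<beta> /\<^sub>R g) = -1"
    using \<open>0 < g\<close> by (simp add: distrib_left [symmetric])
  then have H: "(dir \<beta> /\<^sub>R g, \<beta> /\<^sub>R g) \<in> Hset" by simp
  have "\<beta>' \<bullet> (\<beta> /\<^sub>R g) \<le> dir \<beta>' \<bullet> (dir \<beta> /\<^sub>R g)" if "norm \<beta>' = 1" for \<beta>'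
    using inner_le_inner_dir [OF that \<beta>] \<open>0 < g\<close> by (simp add: divide_right_mono)
  then show ?thesis using H mem_Cset_Hset [OF H] by blast
qed

lemma Hset_shrink: "p \<in> Hset \<Longrightarrow> q \<in> Hset \<Longrightarrow> p - \<theta> *\<^sub>R (p - q) \<in> Hset"
  by (simp add: Hset_def inner_diff_right)

lemma exists_cone_point_near_light_point:
  assumes "convex K" and "Cset \<subseteq> K" and \<beta>: "norm \<beta> = 1" and "\<gamma> + d \<bullet> \<beta> < 0"
    and z: "(x, y) \<in> interior K" "(x, y) \<in> Hset" and viol: "dir \<beta> \<bullet> x < \<beta> \<bullet> y"
  obtains s where "s \<in> interior K" "s \<in> Hset" "norm (fst s) < norm (snd s)"
proof -
  define g where "g = - (\<gamma> + d \<bullet> \<beta>)"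
  have "0 < g" using assms(4) by (simp add: g_def)
  have p: "(dir \<beta> /\<^sub>R g, \<beta> /\<^sub>R g) \<in> K" "(dir \<beta> /\<^sub>R g, \<beta> /\<^sub>R g) \<in> Hset"
    using light_point_mem_Cset_Hset [OF \<beta> assms(4)] assms(2) by (auto simp: g_def)
  have "norm (dir \<beta> /\<^sub>R g) = norm (\<beta> /\<^sub>R g)" using norm_dir [OF \<beta>] \<beta> by simp
  moreover have "(dir \<beta> /\<^sub>R g) \<bullet> x < (\<beta> /\<^sub>R g) \<bullet> y"
    using viol \<open>0 < g\<close> by (simp add: divide_strict_right_mono)
  ultimately obtain \<theta> where \<theta>: "0 < \<theta>" "\<theta> \<le> 1"
    and "norm (dir \<beta> /\<^sub>R g - \<theta> *\<^sub>R (dir \<beta> /\<^sub>R g - x)) < norm (\<beta> /\<^sub>R g - \<theta> *\<^sub>R (\<beta> /\<^sub>R g - y))"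
    by (rule light_cone_segment)
  moreover have "(dir \<beta> /\<^sub>R g, \<beta> /\<^sub>R g) - \<theta> *\<^sub>R ((dir \<beta> /\<^sub>R g, \<beta> /\<^sub>R g) - (x, y)) \<in> interior K"
    using mem_interior_convex_shrink [OF assms(1) z(1) p(1) \<theta>] .
  moreover have "(dir \<beta> /\<^sub>R g, \<beta> /\<^sub>R g) - \<theta> *\<^sub>R ((dir \<beta> /\<^sub>R g, \<beta> /\<^sub>R g) - (x, y)) \<in> Hset"
    using Hset_shrink [OF p(2) z(2)] .
  ultimately show ?thesis using that by simp
qed

lemma exists_cone_point_along_light_ray:
  assumes "convex K" and "Cset \<subseteq> K" and \<beta>: "norm \<beta> = 1" and "0 \<le> \<gamma> + d \<bullet> \<beta>"
    and "z \<in> K" and "0 < \<eta>" and "\<eta> \<le> 1" and z': "z - \<eta> *\<^sub>R (z - (x\<^sub>0, 0)) = (x, y)" "(x, y) \<in> Hset"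
    and viol: "dir \<beta> \<bullet> x < \<beta> \<bullet> y"
  obtains s where "s \<in> interior K" "s \<in> Hset" "norm (fst s) < norm (snd s)"
proof -
  obtain t where "0 < t" and less: "norm (x + t *\<^sub>R dir \<beta>) < norm (y + t *\<^sub>R \<beta>)"
    using light_cone_ray [of "dir \<beta>" \<beta> x y] norm_dir [OF \<beta>] \<beta> viol by auto
  text \<open>The ray is a recession direction of \<open>Cset\<close> but not necessarily of \<open>K\<close>, so the
    point is reached by shrinking \<open>z\<close> towards a far point of the ray through \<open>(x\<^sub>0, 0)\<close>.\<close>
  let ?P = "(x\<^sub>0, 0) + (t / \<eta>) *\<^sub>R (dir \<beta>, \<beta>)"
  have "?P \<in> interior K"
    using interior_Cset_add_ray [OF \<beta> assms(4) base_point(2)] \<open>0 < t\<close> \<open>0 < \<eta>\<close>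
      interior_mono [OF assms(2)] by auto
  have "z - \<eta> *\<^sub>R (z - ?P) = (z - \<eta> *\<^sub>R (z - (x\<^sub>0, 0))) + t *\<^sub>R (dir \<beta>, \<beta>)"
    using \<open>0 < \<eta>\<close> by (simp add: algebra_simps)
  also have "\<dots> = (x + t *\<^sub>R dir \<beta>, y + t *\<^sub>R \<beta>)" by (simp add: z'(1))
  finally have "z - \<eta> *\<^sub>R (z - ?P) = (x + t *\<^sub>R dir \<beta>, y + t *\<^sub>R \<beta>)" .
  moreover have "z - \<eta> *\<^sub>R (z - ?P) \<in> interior K"
    using mem_interior_convex_shrink [OF assms(1) \<open>?P \<in> interior K\<close> assms(5-7)] .
  moreover have "(x + t *\<^sub>R dir \<beta>, y + t *\<^sub>R \<beta>) \<in> Hset"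
  proof -
    have "a \<bullet> dir \<beta> + d \<bullet> \<beta> = 0" using inner_a_dir [of \<beta>] assms(4) by simp
    moreover have "a \<bullet> (x + t *\<^sub>R dir \<beta>) + d \<bullet> (y + t *\<^sub>R \<beta>) = (a \<bullet> x + d \<bullet> y) + t * (a \<bullet> dir \<beta> + d \<bullet> \<beta>)"
      by (simp add: inner_add_right algebra_simps)
    ultimately show ?thesis using z'(2) by simp
  qed
  ultimately show ?thesis using that less by auto
qed

lemma exists_interior_cone_point_if_notin_Cset:
  assumes "convex K" and "Cset \<subseteq> K" and "z \<in> K" and "z \<in> Hset" and "z \<notin> Cset"
  obtains s where "s \<in> interior K" "s \<in> Hset" "norm (fst s) < norm (snd s)"
proof -
  obtain zx zy where z: "z = (zx, zy)" by fastforce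
  obtain \<beta> where \<beta>: "norm \<beta> = 1" and "dir \<beta> \<bullet> zx < \<beta> \<bullet> zy"
    using assms(4,5) mem_Cset_Hset by (auto simp: z not_le)
  then have "(dir \<beta>, - \<beta>) \<bullet> z < 0" by (simp add: z)
  moreover have "0 \<le> (dir \<beta>, - \<beta>) \<bullet> (x\<^sub>0, 0)"
    using mem_Cset_Hset [OF base_point(1)] base_point(2) interior_subset \<beta> by fastforce
  moreover have "(x\<^sub>0, 0) \<in> interior K" using base_point(2) interior_mono [OF assms(2)] by blast
  ultimately obtain \<eta> where \<eta>: "0 < \<eta>" "\<eta> \<le> 1"
    and "z - \<eta> *\<^sub>R (z - (x\<^sub>0, 0)) \<in> interior K" and "(dir \<beta>, - \<beta>) \<bullet> (z - \<eta> *\<^sub>R (z - (x\<^sub>0, 0))) < 0"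
    using exists_interior_point_below [OF assms(1) _ assms(3)] by blast
  moreover obtain x y where xy: "z - \<eta> *\<^sub>R (z - (x\<^sub>0, 0)) = (x, y)" by fastforce
  moreover have "(x, y) \<in> Hset" unfolding xy [symmetric] by (rule Hset_shrink [OF assms(4) base_point(1)])
  ultimately have "(x, y) \<in> interior K" "(x, y) \<in> Hset" "dir \<beta> \<bullet> x < \<beta> \<bullet> y" by auto
  show ?thesis
  proof (cases "\<gamma> + d \<bullet> \<beta> < 0")
    case True
    then show ?thesis using exists_cone_point_near_light_point [OF assms(1,2) \<beta>] that
      \<open>(x, y) \<in> interior K\<close> \<open>(x, y) \<in> Hset\<close> \<open>dir \<beta> \<bullet> x < \<beta> \<bullet> y\<close> by blast
  next
    case False
    then show ?thesis using exists_cone_point_along_light_ray [OF assms(1,2) \<beta> _ assms(3) \<eta> xy] that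
      \<open>(x, y) \<in> Hset\<close> \<open>dir \<beta> \<bullet> x < \<beta> \<bullet> y\<close> by fastforce
  qed
qed

lemma not_S_free_wrt_if_interior_cone_point:
  assumes "s \<in> interior K" and "s \<in> Hset" and "norm (fst s) < norm (snd s)"
  shows "\<not> S_free_wrt Sset Hset K"
proof -
  have "s \<in> Sset" using assms(2,3) by (cases s) (simp add: Sset_def)
  moreover have "s \<in> top_of_set Hset interior_of (K \<inter> Hset)"
    using Int_interior_subset_interior_of assms(1,2) by blast
  ultimately show ?thesis using assms(2) by (auto simp: S_free_wrt_def)
qed

lemma Cset_max_S_free_wrt: "max_S_free_wrt Sset Hset Cset"
  unfolding max_S_free_wrt_def
proof (intro conjI allI impI closed_Cset convex_Cset Cset_S_free)
  fix K assume K: "closed K \<and> convex K \<and> Cset \<subseteq> K \<and> S_free_wrt Sset Hset K"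
  show "K \<inter> Hset \<subseteq> Cset \<inter> Hset"
  proof (rule ccontr)
    assume "\<not> K \<inter> Hset \<subseteq> Cset \<inter> Hset"
    then obtain z where "z \<in> K" "z \<in> Hset" "z \<notin> Cset" by blast
    then show False using exists_interior_cone_point_if_notin_Cset not_S_free_wrt_if_interior_cone_point K by metis
  qed
qed

end

theorem theorem10:
  fixes a lam :: "'n::euclidean_space" and d :: "'m::euclidean_space"
  assumes "norm a = 1" and "norm d < 1" and "norm lam = 1"
    and "lam \<noteq> a" and "lam \<noteq> - a"
  defines "H \<equiv> {(x :: 'n, y :: 'm). a \<bullet> x + d \<bullet> y = -1}"
    and "S \<equiv> {(x :: 'n, y :: 'm). norm x \<le> norm y \<and> a \<bullet> x + d \<bullet> y \<le> 0}"
    and "C \<equiv> {(x :: 'n, y :: 'm). \<forall>\<beta>::'m. norm \<beta> = 1 \<longrightarrow>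
               - (lam \<bullet> x) + grad (phi lam a d) \<beta> \<bullet> y \<le> rfun lam a d \<beta>}"
  shows "max_S_free_wrt S H C \<and>
         (\<forall>xb yb. (xb, yb) \<in> H \<and> norm xb > norm yb \<and> lam = xb /\<^sub>R norm xb
             \<longrightarrow> (xb, yb) \<in> interior C)"
proof -
  interpret free_set_setup a lam d using assms(1-5) by unfold_locales
  have "C = Cset" by (auto simp: C_def mem_Cset grad_phi rfun_eq_mu)
  moreover have "H = Hset" and "S = Sset" by (auto simp: H_def Hset_def S_def Sset_def)
  moreover have "(xb, yb) \<in> interior Cset" if "norm xb > norm yb" and "lam = xb /\<^sub>R norm xb" for xb yb
  proof (rule interior_Cset)
    have "xb \<noteq> 0" using that(1) by auto
    then have "lam \<bullet> xb = norm xb" using that(2) by (simp add: power2_norm_eq_inner [symmetric] power2_eq_square)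
    then show "norm yb < lam \<bullet> xb" using that(1) by simp
  qed
  ultimately show ?thesis using Cset_max_S_free_wrt by auto
qed

end
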